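(* Let $p$ be an odd prime, $a_1,a_2,a_3\in\mathbb{F}_p$, $s = 3+a_1+a_2+a_3$, and let $x=(x_1,x_2,x_3)\in\mathbb{F}_p^3$, $x\neq(0,0,0)$, be a solution of \[ x_1^2+x_2^2+x_3^2+a_1x_2x_3+a_2x_1x_3+a_3x_1x_2 = s\,x_1x_2x_3 \] with $x_i = 0$ for some index $i$ (indices modulo $3$). Then $x_{i-1}\neq 0$; put $r_i := x_{i+1}/x_{i-1}$, which satisfies $r_i^2+a_ir_i+1=0$. Let $m_k$ ($k=1,2,3$) be the map replacing $x_k$ by $-x_k + s x_{k-1}x_{k+1} - a_{k+1}x_{k-1} - a_{k-1}x_{k+1}$ and leaving the other coordinates unchanged, let $\rho = m_{i+1}\circ m_{i-1}$, and let $N$ be the order of $\rho$ as a permutation of the set of nonzero solutions with $i$-th coordinate $0$ (equivalently, the multiplicative order of $r_i^2$). Then the following are equivalent: (1) $a_i^2=4$; (2) $r_i^2=1$; (3) $N=1$; (4) $r_i = -a_i/2$; (5) $r_i^{-1} = -a_i/2$; (6) $x_{i-1} + \frac{a_i}{2}x_{i+1} = 0$; (7) $x_{i-1}^2 = x_{i+1}^2$; (8) $m_{i-1}x = x$; (9) $m_{i+1}x = x$.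
   Context: On solutions with $x_i=0$ the moves $m_{i\pm1}$ preserve the condition $x_i = 0$; $\rho$ multiplies the points of each of the two lines $x_{i+1}=r x_{i-1}$ (with $r$ a root of $r^2+a_ir+1=0$) by $r^{\pm 2}$. *)

theory Defs
  imports "HOL-Analysis.Analysis"
begin

text \<open>Points of F_p^3 are vectors of type 'a^3 indexed by the numeral type 3,
  whose ring structure gives indices modulo 3 (the index 3 coincides with 0).\<close>

definition sval :: "'a::field^3 \<Rightarrow> 'a" where
  "sval a = 3 + a$1 + a$2 + a$3"

definition markov_eq :: "'a::field^3 \<Rightarrow> 'a^3 \<Rightarrow> bool" where
  "markov_eq a x \<longleftrightarrow>
     x$1^2 + x$2^2 + x$3^2 + a$1*x$2*x$3 + a$2*x$1*x$3 + a$3*x$1*x$2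
       = sval a * x$1 * x$2 * x$3"

definition move :: "'a::field^3 \<Rightarrow> 3 \<Rightarrow> 'a^3 \<Rightarrow> 'a^3" where
  "move a k x = (\<chi> j. if j = k then
       - x$k + sval a * x$(k-1) * x$(k+1) - a$(k+1) * x$(k-1) - a$(k-1) * x$(k+1)
     else x$j)"

definition perm_order :: "('b \<Rightarrow> 'b) \<Rightarrow> 'b set \<Rightarrow> nat" where
  "perm_order f S = (LEAST n. n > 0 \<and> (\<forall>y\<in>S. (f ^^ n) y = y))"

end

theory Submission
  imports Defs "HOL-Number_Theory.Residues" "HOL-Combinatorics.Cycles" "HOL-Library.Cardinality"
begin

text \<open>On the plane \<open>x\<^sub>i = 0\<close> the equation becomes the binary quadratic form
  \<open>u\<^sup>2 + v\<^sup>2 + a\<^sub>i u v = 0\<close> in \<open>u = x\<^sub>i\<^sub>-\<^sub>1\<close>, \<open>v = x\<^sub>i\<^sub>+\<^sub>1\<close>.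
  Completing the square, \<open>(2u + a\<^sub>i v)\<^sup>2 = (a\<^sub>i\<^sup>2 - 4) v\<^sup>2\<close>, so a nonzero solution has
  \<open>u, v \<noteq> 0\<close>, and \<open>a\<^sub>i\<^sup>2 = 4\<close> holds exactly when \<open>2u + a\<^sub>i v = 0\<close>, i.e. when the move
  \<open>m\<^sub>i\<^sub>-\<^sub>1\<close>, which acts on the plane by \<open>u \<mapsto> -u - a\<^sub>i v\<close>, fixes the point.
  The remaining conditions are rewritings of this one; only \<open>2 \<noteq> 0\<close> is needed from
  the field. Since \<open>a\<^sub>i\<^sup>2 = 4\<close> does not depend on the
  point, it makes \<open>\<rho>\<close> fix the whole plane; conversely \<open>\<rho> x = x\<close> forces
  \<open>m\<^sub>i\<^sub>-\<^sub>1 x = x\<close>, as \<open>m\<^sub>i\<^sub>+\<^sub>1\<close> does not touch coordinate \<open>i - 1\<close>.\<close>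

lemma two_neq_zero_if_odd_card:
  assumes "odd CARD('a::field)"
  shows "(2::'a) \<noteq> 0"
proof
  assume two: "(2::'a) = 0"
  obtain k where k: "CARD('a) = 2 * k + 1"
    using assms oddE by blast
  have "of_nat CARD('a) = (0::'a)"
    using CHAR_dvd_CARD of_nat_eq_0_iff_char_dvd by blast
  then have "1 + 2 * of_nat k = (0::'a)"
    by (simp add: k)
  with two show False
    by simp
qed

lemma finite_UNIV_vec:
  assumes "finite (UNIV :: 'a set)"
  shows "finite (UNIV :: ('a^'n) set)"
proof -
  have "UNIV = range (vec_lambda :: ('n \<Rightarrow> 'a) \<Rightarrow> 'a^'n)"
    by (metis surj_def vec_lambda_eta)
  moreover have "finite (UNIV :: ('n \<Rightarrow> 'a) set)"
    using assms by (simp add: finite_UNIV_fun)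
  ultimately show ?thesis
    by (metis finite_imageI)
qed

lemma perm_order_eq_1_iff:
  fixes f :: "'b \<Rightarrow> 'b"
  assumes "finite (UNIV :: 'b set)" and "bij f"
  shows "perm_order f S = 1 \<longleftrightarrow> (\<forall>y\<in>S. f y = y)"
proof
  have "f permutes UNIV"
    using assms(2) by (rule bij_imp_permutes) simp
  then have "permutation f"
    using assms(1) permutation_permutes by blast
  then obtain n where "f ^^ n = id" "n > 0"
    by (rule permutation_is_nilpotent)
  then have "\<exists>n > 0. \<forall>y\<in>S. (f ^^ n) y = y"
    by auto
  then have "\<forall>y\<in>S. (f ^^ perm_order f S) y = y"
    unfolding perm_order_def by (rule LeastI2_ex) blast
  then show "\<forall>y\<in>S. f y = y" if "perm_order f S = 1"
    using that by simp
next
  show "perm_order f S = 1" if "\<forall>y\<in>S. f y = y"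
    unfolding perm_order_def by (rule Least_equality) (use that in auto)
qed

lemma minus_diff_eq_self_iff:
  fixes u w :: "'a::comm_ring_1"
  shows "- u - w = u \<longleftrightarrow> 2 * u + w = 0"
  by (auto simp: mult_2 algebra_simps eq_neg_iff_add_eq_0)

lemma binary_form_zero_imp_nonzero:
  fixes u v A :: "'a::idom"
  assumes "u^2 + v^2 + A * u * v = 0" and "u \<noteq> 0 \<or> v \<noteq> 0"
  shows "u \<noteq> 0" and "v \<noteq> 0"
  using assms by (auto simp: power2_eq_square)

lemma binary_form_complete_square:
  fixes u v A :: "'a::comm_ring_1"
  assumes "u^2 + v^2 + A * u * v = 0"
  shows "(2 * u + A * v)^2 = (A^2 - 4) * v^2"
proof -
  have "(2 * u + A * v)^2 - (A^2 - 4) * v^2 = 4 * (u^2 + v^2 + A * u * v)"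
    by (simp add: algebra_simps power2_eq_square)
  with assms show ?thesis
    by simp
qed

lemma binary_form_degenerate_iff:
  fixes u v A :: "'a::idom"
  assumes "u^2 + v^2 + A * u * v = 0" and "v \<noteq> 0"
  shows "A^2 = 4 \<longleftrightarrow> 2 * u + A * v = 0"
  using binary_form_complete_square[OF assms(1)] assms(2) by auto

lemma binary_form_degenerate_iff_sq_eq:
  fixes u v A :: "'a::idom"
  assumes form: "u^2 + v^2 + A * u * v = 0" and "u \<noteq> 0" and "v \<noteq> 0"
  shows "A^2 = 4 \<longleftrightarrow> u^2 = v^2"
proof -
  have "u * (2 * u + A * v) = (u^2 + v^2 + A * u * v) + (u^2 - v^2)"
    by (simp add: algebra_simps power2_eq_square)
  then have "u * (2 * u + A * v) = 0 \<longleftrightarrow> u^2 = v^2"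
    using form by simp
  then show ?thesis
    using binary_form_degenerate_iff[OF form \<open>v \<noteq> 0\<close>] \<open>u \<noteq> 0\<close> by simp
qed

lemma binary_form_ratio_root:
  fixes u v A :: "'a::field"
  assumes "u^2 + v^2 + A * u * v = 0" and "u \<noteq> 0"
  shows "(v / u)^2 + A * (v / u) + 1 = 0"
proof -
  have "(v / u)^2 + A * (v / u) + 1 = (u^2 + v^2 + A * u * v) / u^2"
    using assms(2) by (simp add: field_simps power2_eq_square)
  with assms(1) show ?thesis
    by simp
qed

lemma binary_form_degenerate_iff_ratio:
  fixes u v A :: "'a::field"
  assumes "(2::'a) \<noteq> 0" and form: "u^2 + v^2 + A * u * v = 0" and "u \<noteq> 0" and "v \<noteq> 0"
  shows "A^2 = 4 \<longleftrightarrow> (v / u)^2 = 1"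
    and "A^2 = 4 \<longleftrightarrow> v / u = - A / 2"
    and "A^2 = 4 \<longleftrightarrow> inverse (v / u) = - A / 2"
    and "A^2 = 4 \<longleftrightarrow> u + A / 2 * v = 0"
proof -
  have form': "v^2 + u^2 + A * v * u = 0"
    using form by (simp add: ac_simps)
  note degenerate_u = binary_form_degenerate_iff[OF form \<open>v \<noteq> 0\<close>]
  note degenerate_v = binary_form_degenerate_iff[OF form' \<open>u \<noteq> 0\<close>]
  show "A^2 = 4 \<longleftrightarrow> (v / u)^2 = 1"
    using binary_form_degenerate_iff_sq_eq[OF form assms(3,4)] assms(3)
    by (auto simp: power_divide)
  show "A^2 = 4 \<longleftrightarrow> v / u = - A / 2"
    using degenerate_v assms(1,3) by (simp add: field_simps eq_neg_iff_add_eq_0)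
  show "A^2 = 4 \<longleftrightarrow> inverse (v / u) = - A / 2"
    using degenerate_u assms(1,3,4) by (simp add: field_simps eq_neg_iff_add_eq_0)
  show "A^2 = 4 \<longleftrightarrow> u + A / 2 * v = 0"
    using degenerate_u assms(1) by (simp add: field_simps)
qed

lemma mod3_neighbours:
  fixes i :: 3
  shows "i - 1 \<noteq> i" "i + 1 \<noteq> i" "i - 1 \<noteq> i + 1"
    "i - 2 = i + 1" "2 + i = i - 1"
  using exhaust_3[of i] by auto

text \<open>Oriented so that indices computed by the simplifier match the cases \<open>1, 2, 3\<close>
  of \<open>exhaust_3\<close>.\<close>

lemma numerals_mod3: "(0::3) = 3" "(4::3) = 1"
  by simp_all

lemma vec3_neighbour_nonzero:
  fixes y :: "'a::zero^3"
  assumes "y \<noteq> 0" and "y$i = 0"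
  shows "y$(i - 1) \<noteq> 0 \<or> y$(i + 1) \<noteq> 0"
proof (rule ccontr)
  assume "\<not> ?thesis"
  then have "y$j = 0" for j
    using assms(2) exhaust_3[of i] exhaust_3[of j] by (auto simp: numerals_mod3)
  with assms(1) show False
    by (simp add: vec_eq_iff)
qed

lemma markov_eq_on_coordinate_plane:
  assumes "markov_eq a y" and "y$i = 0"
  shows "y$(i - 1)^2 + y$(i + 1)^2 + a$i * y$(i - 1) * y$(i + 1) = 0"
  using exhaust_3[of i] assms by (auto simp: markov_eq_def ac_simps numerals_mod3)

lemma move_nth:
  "move a k y $ j = (if j = k then
     - y$k + sval a * y$(k - 1) * y$(k + 1) - a$(k + 1) * y$(k - 1) - a$(k - 1) * y$(k + 1)
   else y$j)"
  by (simp add: move_def)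

lemma move_move: "move a k (move a k y) = y"
  by (simp add: vec_eq_iff move_nth mod3_neighbours(1,2))

lemma move_eq_self_iff: "move a k y = y \<longleftrightarrow> move a k y $ k = y $ k"
  by (auto simp: vec_eq_iff move_nth)

lemma move_neighbour_eq_self_iff:
  assumes "markov_eq a y" and "y \<noteq> 0" and "y$i = 0"
  shows "move a (i - 1) y = y \<longleftrightarrow> a$i^2 = 4"
    and "move a (i + 1) y = y \<longleftrightarrow> a$i^2 = 4"
proof -
  let ?u = "y$(i - 1)" and ?v = "y$(i + 1)"
  have form: "?u^2 + ?v^2 + a$i * ?u * ?v = 0"
    using markov_eq_on_coordinate_plane[OF assms(1,3)] .
  then have form': "?v^2 + ?u^2 + a$i * ?v * ?u = 0"
    by (simp add: ac_simps)
  have "?u \<noteq> 0" "?v \<noteq> 0"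
    using binary_form_zero_imp_nonzero[OF form vec3_neighbour_nonzero[OF assms(2,3)]] by auto
  have "move a (i - 1) y $ (i - 1) = - ?u - a$i * ?v"
    using assms(3) by (simp add: move_nth mod3_neighbours(1,3,4))
  then show "move a (i - 1) y = y \<longleftrightarrow> a$i^2 = 4"
    using binary_form_degenerate_iff[OF form \<open>?v \<noteq> 0\<close>]
    by (simp add: move_eq_self_iff minus_diff_eq_self_iff)
  have "move a (i + 1) y $ (i + 1) = - ?v - a$i * ?u"
    using assms(3) by (simp add: move_nth mod3_neighbours(2,3,5))
  then show "move a (i + 1) y = y \<longleftrightarrow> a$i^2 = 4"
    using binary_form_degenerate_iff[OF form' \<open>?u \<noteq> 0\<close>]
    by (simp add: move_eq_self_iff minus_diff_eq_self_iff)
qed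

lemma move_rotation_fixes_plane_iff:
  assumes "markov_eq a x" and "x \<noteq> 0" and "x$i = 0"
  shows "(\<forall>y \<in> {y. markov_eq a y \<and> y \<noteq> 0 \<and> y$i = 0}.
            (move a (i + 1) \<circ> move a (i - 1)) y = y) \<longleftrightarrow> a$i^2 = 4"
    (is "(\<forall>y \<in> ?S. ?\<rho> y = y) \<longleftrightarrow> _")
proof
  assume "\<forall>y \<in> ?S. ?\<rho> y = y"
  then have "move a (i + 1) (move a (i - 1) x) $ (i - 1) = x $ (i - 1)"
    using assms by simp
  then have "move a (i - 1) x = x"
    by (simp add: move_eq_self_iff move_nth[of a "i + 1"] mod3_neighbours(3))
  then show "a$i^2 = 4"
    using move_neighbour_eq_self_iff(1)[OF assms] by simp
next
  assume "a$i^2 = 4"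
  show "\<forall>y \<in> ?S. ?\<rho> y = y"
  proof
    fix y
    assume "y \<in> ?S"
    then have y: "markov_eq a y" "y \<noteq> 0" "y$i = 0"
      by auto
    have "move a (i - 1) y = y" and "move a (i + 1) y = y"
      using move_neighbour_eq_self_iff[OF y] \<open>a$i^2 = 4\<close> by simp_all
    then show "?\<rho> y = y"
      by simp
  qed
qed

theorem lemma2p1:
  fixes a x :: "'a::field ^ 3" and i :: 3 and p :: nat
  assumes "finite (UNIV :: 'a set)" and "CARD('a) = p" and "prime p" and "odd p"
    and "markov_eq a x" and "x \<noteq> 0" and "x$i = 0"
  shows "x$(i-1) \<noteq> 0 \<and>
    (let r = x$(i+1) / x$(i-1);
         \<rho> = move a (i+1) \<circ> move a (i-1);
         N = perm_order \<rho> {y. markov_eq a y \<and> y \<noteq> 0 \<and> y$i = 0};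
         c1 = (a$i^2 = 4);
         c2 = (r^2 = 1);
         c3 = (N = 1);
         c4 = (r = - a$i / 2);
         c5 = (inverse r = - a$i / 2);
         c6 = (x$(i-1) + a$i / 2 * x$(i+1) = 0);
         c7 = (x$(i-1)^2 = x$(i+1)^2);
         c8 = (move a (i-1) x = x);
         c9 = (move a (i+1) x = x)
     in r^2 + a$i * r + 1 = 0 \<and>
        (c1 \<longleftrightarrow> c2) \<and> (c1 \<longleftrightarrow> c3) \<and> (c1 \<longleftrightarrow> c4) \<and> (c1 \<longleftrightarrow> c5) \<and>
        (c1 \<longleftrightarrow> c6) \<and> (c1 \<longleftrightarrow> c7) \<and> (c1 \<longleftrightarrow> c8) \<and> (c1 \<longleftrightarrow> c9))"
proof -
  let ?u = "x$(i - 1)" and ?v = "x$(i + 1)"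
  let ?\<rho> = "move a (i + 1) \<circ> move a (i - 1)"
  let ?S = "{y. markov_eq a y \<and> y \<noteq> 0 \<and> y$i = 0}"
  have form: "?u^2 + ?v^2 + a$i * ?u * ?v = 0"
    using markov_eq_on_coordinate_plane[OF assms(5,7)] .
  have nonzero: "?u \<noteq> 0" "?v \<noteq> 0"
    using binary_form_zero_imp_nonzero[OF form vec3_neighbour_nonzero[OF assms(6,7)]] by auto
  have two: "(2::'a) \<noteq> 0"
    by (rule two_neq_zero_if_odd_card) (simp add: assms(2,4))
  have "bij ?\<rho>"
    by (intro bij_comp involuntory_imp_bij move_move)
  then have "perm_order ?\<rho> ?S = 1 \<longleftrightarrow> (\<forall>y\<in>?S. ?\<rho> y = y)"
    by (rule perm_order_eq_1_iff[OF finite_UNIV_vec[OF assms(1)]])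
  also have "\<dots> \<longleftrightarrow> a$i^2 = 4"
    by (rule move_rotation_fixes_plane_iff[OF assms(5-7)])
  finally have order: "perm_order ?\<rho> ?S = 1 \<longleftrightarrow> a$i^2 = 4" .
  show ?thesis
    unfolding Let_def
    using nonzero order binary_form_ratio_root[OF form nonzero(1)]
      binary_form_degenerate_iff_ratio[OF two form nonzero]
      binary_form_degenerate_iff_sq_eq[OF form nonzero]
      move_neighbour_eq_self_iff[OF assms(5-7)]
    by simp
qed

end
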